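(* If a billiard-like interval exchange transformation $f$ of $I=[-1,1)$ satisfies the modified Keane condition, then $f$ has no periodic points.
   Context: An interval exchange transformation of $I=[-1,1)$: a finite partition $\{I_\alpha\}_{\alpha\in\mathcal{A}}$ of $I$ into intervals closed on the left and open on the right ($|\mathcal{A}|\ge2$), and a bijection $f:I\to I$ whose restriction to each $I_\alpha$ is a translation. Let $p_\alpha$ be the left endpoint of $I_\alpha$. $f$ is billiard-like if: each $I_\alpha$ is contained in $[-1,0)$ or in $[0,1)$; each $f(I_\alpha)$ is contained in $[-1,0)$ or in $[0,1)$; and each of $[-1,0)$, $[0,1)$ contains at least two intervals of the partition. A billiard-like $f$ satisfies the modified Keane condition if $f^m(p_\alpha)\ne p_\beta$ for all $m\ge1$, all $\alpha\in\mathcal{A}$, and all $\beta\in\mathcal{A}$ with $p_\beta\notin\{-1,0\}$. *)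

theory Defs
  imports Complex_Main
begin

definition IET :: "'a set \<Rightarrow> ('a \<Rightarrow> real) \<Rightarrow> ('a \<Rightarrow> real) \<Rightarrow> (real \<Rightarrow> real) \<Rightarrow> bool" where
  "IET A p q f \<longleftrightarrow>
     finite A \<and> card A \<ge> 2 \<and>
     (\<forall>\<alpha>\<in>A. p \<alpha> < q \<alpha>) \<and>
     (\<forall>\<alpha>\<in>A. \<forall>\<beta>\<in>A. \<alpha> \<noteq> \<beta> \<longrightarrow> {p \<alpha>..<q \<alpha>} \<inter> {p \<beta>..<q \<beta>} = {}) \<and>
     (\<Union>\<alpha>\<in>A. {p \<alpha>..<q \<alpha>}) = {-1..<1} \<and>
     bij_betw f {-1..<1} {-1..<1} \<and>
     (\<forall>\<alpha>\<in>A. \<exists>t. \<forall>x\<in>{p \<alpha>..<q \<alpha>}. f x = x + t)"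

definition billiard_like :: "'a set \<Rightarrow> ('a \<Rightarrow> real) \<Rightarrow> ('a \<Rightarrow> real) \<Rightarrow> (real \<Rightarrow> real) \<Rightarrow> bool" where
  "billiard_like A p q f \<longleftrightarrow>
     IET A p q f \<and>
     (\<forall>\<alpha>\<in>A. {p \<alpha>..<q \<alpha>} \<subseteq> {-1..<0} \<or> {p \<alpha>..<q \<alpha>} \<subseteq> {0..<1}) \<and>
     (\<forall>\<alpha>\<in>A. f ` {p \<alpha>..<q \<alpha>} \<subseteq> {-1..<0} \<or> f ` {p \<alpha>..<q \<alpha>} \<subseteq> {0..<1}) \<and>
     card {\<alpha>\<in>A. {p \<alpha>..<q \<alpha>} \<subseteq> {-1..<0}} \<ge> 2 \<and>
     card {\<alpha>\<in>A. {p \<alpha>..<q \<alpha>} \<subseteq> {0..<1}} \<ge> 2"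

definition modified_keane :: "'a set \<Rightarrow> ('a \<Rightarrow> real) \<Rightarrow> (real \<Rightarrow> real) \<Rightarrow> bool" where
  "modified_keane A p f \<longleftrightarrow>
     (\<forall>m::nat. \<forall>\<alpha>\<in>A. \<forall>\<beta>\<in>A. m \<ge> 1 \<longrightarrow> p \<beta> \<notin> {-1, 0} \<longrightarrow> (f ^^ m) (p \<alpha>) \<noteq> p \<beta>)"

definition periodic_point :: "(real \<Rightarrow> real) \<Rightarrow> real \<Rightarrow> bool" where
  "periodic_point f x \<longleftrightarrow> x \<in> {-1..<1} \<and> (\<exists>n::nat. n \<ge> 1 \<and> (f ^^ n) x = x)"

end

theory Submission
  imports Defs
begin

text \<open>Since \<open>f\<close> is a translation on each interval, a periodic orbit can be pushed to the left
  until one of its points hits a left endpoint \<open>p \<beta>\<close>; by the modified Keane condition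
  \<open>p \<beta>\<close> is \<open>-1\<close> or \<open>0\<close>. A point mapped to \<open>-1\<close> or \<open>0\<close> must itself be a left endpoint,
  because the two halves are invariant under the local translations, so the whole orbit lies
  in \<open>{-1, 0}\<close>: it is a fixed point or a 2-cycle exchanging \<open>-1\<close> and \<open>0\<close>. The interval
  \<open>I\<^sub>\<alpha>\<close> starting at such a point ends at a left endpoint \<open>q \<alpha>\<close> inside its half, and following
  the translate of \<open>I\<^sub>\<alpha>\<close> one finds a left endpoint reaching \<open>q \<alpha>\<close> in one or two steps,
  contradicting the Keane condition.\<close>

locale iet =
  fixes A :: "'a set" and p q :: "'a \<Rightarrow> real" and f :: "real \<Rightarrow> real"
  assumes iet: "IET A p q f"
begin

lemma interval_nonempty: "\<alpha> \<in> A \<Longrightarrow> p \<alpha> < q \<alpha>"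
  using iet unfolding IET_def by blast

lemma intervals_disjoint:
  "\<alpha> \<in> A \<Longrightarrow> \<beta> \<in> A \<Longrightarrow> x \<in> {p \<alpha>..<q \<alpha>} \<Longrightarrow> x \<in> {p \<beta>..<q \<beta>} \<Longrightarrow> \<alpha> = \<beta>"
  using iet unfolding IET_def by blast

lemma intervals_cover: "x \<in> {-1..<1} \<Longrightarrow> \<exists>\<alpha>\<in>A. x \<in> {p \<alpha>..<q \<alpha>}"
  using iet unfolding IET_def by blast

lemma interval_subset: "\<alpha> \<in> A \<Longrightarrow> {p \<alpha>..<q \<alpha>} \<subseteq> {-1..<1}"
  using iet unfolding IET_def by blast

lemma endpoints_bounds: "\<alpha> \<in> A \<Longrightarrow> -1 \<le> p \<alpha> \<and> p \<alpha> < 1 \<and> q \<alpha> \<le> 1"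
  using interval_subset interval_nonempty by fastforce

lemma bij_f: "bij_betw f {-1..<1} {-1..<1}"
  using iet unfolding IET_def by blast

lemma funpow_in: "x \<in> {-1..<1} \<Longrightarrow> (f ^^ n) x \<in> {-1..<1}"
  using bij_betwE[OF bij_betw_funpow[OF bij_f]] by blast

definition translation :: "'a \<Rightarrow> real" where
  "translation \<alpha> = f (p \<alpha>) - p \<alpha>"

lemma f_translation:
  assumes \<alpha>: "\<alpha> \<in> A" and x: "x \<in> {p \<alpha>..<q \<alpha>}"
  shows "f x = x + translation \<alpha>"
proof -
  obtain t where t: "\<forall>y\<in>{p \<alpha>..<q \<alpha>}. f y = y + t"
    using iet \<alpha> unfolding IET_def by (elim conjE) blast
  have "f (p \<alpha>) = p \<alpha> + t" using t interval_nonempty[OF \<alpha>] by simp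
  then show ?thesis using t x unfolding translation_def by simp
qed

definition letter :: "real \<Rightarrow> 'a" where
  "letter x = (THE \<alpha>. \<alpha> \<in> A \<and> x \<in> {p \<alpha>..<q \<alpha>})"

lemma letter: "x \<in> {-1..<1} \<Longrightarrow> letter x \<in> A \<and> x \<in> {p (letter x)..<q (letter x)}"
  unfolding letter_def
  by (rule theI') (use intervals_cover intervals_disjoint in blast)

definition gap :: "real \<Rightarrow> real" where
  "gap x = x - p (letter x)"

lemma gap_nonneg: "x \<in> {-1..<1} \<Longrightarrow> 0 \<le> gap x"
  using letter unfolding gap_def by auto

lemma f_shift_left:
  assumes "x \<in> {-1..<1}" "0 \<le> d" "d \<le> gap x"
  shows "f (x - d) = f x - d"
proof -
  let ?\<alpha> = "letter x"
  have "?\<alpha> \<in> A" "x \<in> {p ?\<alpha>..<q ?\<alpha>}" "x - d \<in> {p ?\<alpha>..<q ?\<alpha>}"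
    using letter[OF assms(1)] assms(2,3) unfolding gap_def by auto
  then show ?thesis using f_translation by simp
qed

lemma funpow_shift_left:
  assumes x: "x \<in> {-1..<1}" and d: "0 \<le> d" "\<forall>k<n. d \<le> gap ((f ^^ k) x)" and "k \<le> n"
  shows "(f ^^ k) (x - d) = (f ^^ k) x - d"
  using \<open>k \<le> n\<close>
proof (induction k)
  case (Suc k)
  then show ?case using f_shift_left[OF funpow_in[OF x] d(1)] d(2) by simp
qed simp

text \<open>Shifting a periodic orbit to the left by the least distance of its points to the left
  endpoints of their intervals keeps it an orbit, and puts one of its points on a left endpoint.\<close>

lemma periodic_point_imp_periodic_left_endpoint:
  assumes x: "x \<in> {-1..<1}" and n: "n \<ge> 1" and per: "(f ^^ n) x = x"
  shows "\<exists>\<beta>\<in>A. (f ^^ n) (p \<beta>) = p \<beta>"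
proof -
  define gaps where "gaps = (\<lambda>k. gap ((f ^^ k) x)) ` {..<n}"
  have gaps: "finite gaps" "gaps \<noteq> {}"
    unfolding gaps_def using n by (auto simp: lessThan_empty_iff)
  define d where "d = Min gaps"
  obtain k0 where k0: "k0 < n" "d = gap ((f ^^ k0) x)"
    using Min_in[OF gaps] unfolding d_def gaps_def by auto
  have d: "0 \<le> d" "\<forall>k<n. d \<le> gap ((f ^^ k) x)"
    using k0(2) gap_nonneg[OF funpow_in[OF x]] Min_le[OF gaps(1)] unfolding d_def gaps_def by auto
  define \<beta> where "\<beta> = letter ((f ^^ k0) x)"
  have "p \<beta> = (f ^^ k0) (x - d)"
    using funpow_shift_left[OF x d, of k0] k0 unfolding \<beta>_def gap_def by simp
  moreover have "(f ^^ n) (x - d) = x - d"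
    using funpow_shift_left[OF x d order_refl] per by simp
  ultimately have "(f ^^ n) (p \<beta>) = p \<beta>"
    by (metis comp_apply funpow_add add.commute)
  then show ?thesis using letter[OF funpow_in[OF x]] unfolding \<beta>_def by blast
qed

lemma right_endpoint_is_left_endpoint:
  assumes \<alpha>: "\<alpha> \<in> A" and "q \<alpha> < 1"
  shows "\<exists>\<beta>\<in>A. p \<beta> = q \<alpha>"
proof -
  have "q \<alpha> \<in> {-1..<1}"
    using assms endpoints_bounds[OF \<alpha>] interval_nonempty[OF \<alpha>] by auto
  then obtain \<beta> where \<beta>: "\<beta> \<in> A" "q \<alpha> \<in> {p \<beta>..<q \<beta>}"
    using intervals_cover by blast
  have "p \<beta> = q \<alpha>"
  proof (rule ccontr)
    assume "p \<beta> \<noteq> q \<alpha>"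
    then have "max (p \<alpha>) (p \<beta>) \<in> {p \<alpha>..<q \<alpha>} \<inter> {p \<beta>..<q \<beta>}"
      using \<beta>(2) interval_nonempty[OF \<alpha>] by auto
    then show False using intervals_disjoint[OF \<alpha> \<beta>(1), of "max (p \<alpha>) (p \<beta>)"] \<beta>(2) by auto
  qed
  then show ?thesis using \<beta>(1) by blast
qed

text \<open>The point where the translate of an interval would continue past its right endpoint is
  the image of a left endpoint: otherwise injectivity of \<open>f\<close> fails just to the left of it.\<close>

lemma translated_right_endpoint_image_of_left_endpoint:
  assumes \<alpha>: "\<alpha> \<in> A" and y: "y = q \<alpha> + translation \<alpha>" "y \<in> {-1..<1}"
  shows "\<exists>\<gamma>\<in>A. f (p \<gamma>) = y"
proof -
  obtain w where w: "w \<in> {-1..<1}" "f w = y"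
    using bij_f y(2) unfolding bij_betw_def by (metis imageE)
  obtain \<gamma> where \<gamma>: "\<gamma> \<in> A" "w \<in> {p \<gamma>..<q \<gamma>}" using intervals_cover w(1) by blast
  show ?thesis
  proof (cases "w = p \<gamma>")
    case True then show ?thesis using \<gamma> w by blast
  next
    case False
    define \<epsilon> where "\<epsilon> = min (w - p \<gamma>) (q \<alpha> - p \<alpha>) / 2"
    have \<epsilon>: "0 < \<epsilon>" "\<epsilon> < w - p \<gamma>" "\<epsilon> < q \<alpha> - p \<alpha>"
      using False \<gamma>(2) interval_nonempty[OF \<alpha>] unfolding \<epsilon>_def by auto
    have u: "w - \<epsilon> \<in> {p \<gamma>..<q \<gamma>}" and v: "q \<alpha> - \<epsilon> \<in> {p \<alpha>..<q \<alpha>}"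
      using \<epsilon> \<gamma>(2) by auto
    have "f (w - \<epsilon>) = f (q \<alpha> - \<epsilon>)"
      using f_translation[OF \<gamma>(1) u] f_translation[OF \<gamma>] f_translation[OF \<alpha> v] w y(1) by simp
    then have "w - \<epsilon> = q \<alpha> - \<epsilon>"
      using bij_f u v interval_subset[OF \<alpha>] interval_subset[OF \<gamma>(1)]
      unfolding bij_betw_def inj_on_def by blast
    then have "w = q \<alpha>" "\<alpha> = \<gamma>"
      using intervals_disjoint[OF \<alpha> \<gamma>(1) _ u] v by auto
    then show ?thesis using \<gamma>(2) by simp
  qed
qed

end

locale billiard_iet = iet +
  assumes billiard: "billiard_like A p q f"
begin

lemma interval_in_half: "\<alpha> \<in> A \<Longrightarrow> {p \<alpha>..<q \<alpha>} \<subseteq> {-1..<0} \<or> {p \<alpha>..<q \<alpha>} \<subseteq> {0..<1}"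
  using billiard unfolding billiard_like_def by blast

lemma image_in_half: "\<alpha> \<in> A \<Longrightarrow> f ` {p \<alpha>..<q \<alpha>} \<subseteq> {-1..<0} \<or> f ` {p \<alpha>..<q \<alpha>} \<subseteq> {0..<1}"
  using billiard unfolding billiard_like_def by blast

lemma two_intervals_in_half:
  "z \<in> {-1, 0} \<Longrightarrow> card {\<alpha>\<in>A. {p \<alpha>..<q \<alpha>} \<subseteq> {z..<z + 1}} \<ge> 2"
  using billiard unfolding billiard_like_def by auto

lemma half_start_is_left_endpoint:
  assumes z: "z \<in> {-1, 0}"
  shows "\<exists>\<alpha>\<in>A. p \<alpha> = z"
proof -
  have "z \<in> {-1..<1}" using z by auto
  then obtain \<alpha> where \<alpha>: "\<alpha> \<in> A" "z \<in> {p \<alpha>..<q \<alpha>}" using intervals_cover by blast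
  have "{p \<alpha>..<q \<alpha>} \<subseteq> {-1..<0} \<or> {p \<alpha>..<q \<alpha>} \<subseteq> {0..<1}"
    by (rule interval_in_half[OF \<alpha>(1)])
  then have "z \<le> p \<alpha>"
    using \<alpha>(2) z endpoints_bounds[OF \<alpha>(1)] interval_nonempty[OF \<alpha>(1)] by fastforce
  then have "p \<alpha> = z" using \<alpha>(2) by simp
  then show ?thesis using \<alpha>(1) by blast
qed

lemma half_start_interval_short:
  assumes \<alpha>: "\<alpha> \<in> A" and z: "p \<alpha> \<in> {-1, 0}"
  shows "q \<alpha> < p \<alpha> + 1"
proof (rule ccontr)
  let ?H = "{p \<alpha>..<p \<alpha> + 1}"
  assume "\<not> q \<alpha> < p \<alpha> + 1"
  moreover have "{p \<alpha>..<q \<alpha>} \<subseteq> ?H"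
    using interval_in_half[OF \<alpha>] z interval_nonempty[OF \<alpha>] by auto
  ultimately have whole: "{p \<alpha>..<q \<alpha>} = ?H" by auto
  have "{\<beta>\<in>A. {p \<beta>..<q \<beta>} \<subseteq> ?H} \<subseteq> {\<alpha>}"
  proof
    fix \<beta> assume \<beta>: "\<beta> \<in> {\<beta>\<in>A. {p \<beta>..<q \<beta>} \<subseteq> ?H}"
    then have "p \<beta> \<in> {p \<beta>..<q \<beta>}" using interval_nonempty by simp
    then show "\<beta> \<in> {\<alpha>}" using \<beta> whole intervals_disjoint[OF \<alpha>] by blast
  qed
  then have "card {\<beta>\<in>A. {p \<beta>..<q \<beta>} \<subseteq> ?H} \<le> 1"
    using card_mono[of "{\<alpha>}"] by fastforce
  then show False using two_intervals_in_half[OF z] by simp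
qed

lemma interior_right_endpoint:
  assumes \<alpha>: "\<alpha> \<in> A" and z: "p \<alpha> \<in> {-1, 0}"
  shows "\<exists>\<beta>\<in>A. p \<beta> = q \<alpha> \<and> p \<beta> \<notin> {-1, 0}"
proof -
  have "q \<alpha> < p \<alpha> + 1" by (rule half_start_interval_short[OF assms])
  moreover have "p \<alpha> < q \<alpha>" by (rule interval_nonempty[OF \<alpha>])
  ultimately show ?thesis using right_endpoint_is_left_endpoint[OF \<alpha>] z by fastforce
qed

text \<open>Both half-intervals start at \<open>-1\<close> or \<open>0\<close> and each interval is mapped into one half, so
  nothing immediately to the left of a preimage of \<open>-1\<close> or \<open>0\<close> can lie in the same interval.\<close>

lemma preimage_of_half_start_is_left_endpoint:
  assumes w: "w \<in> {-1..<1}" "f w \<in> {-1, 0}"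
  shows "\<exists>\<gamma>\<in>A. p \<gamma> = w"
proof -
  obtain \<gamma> where \<gamma>: "\<gamma> \<in> A" "w \<in> {p \<gamma>..<q \<gamma>}" using intervals_cover w(1) by blast
  have "p \<gamma> = w"
  proof (rule ccontr)
    assume "p \<gamma> \<noteq> w"
    define u where "u = (p \<gamma> + w) / 2"
    have u: "u \<in> {p \<gamma>..<q \<gamma>}" "u < w" using \<gamma>(2) \<open>p \<gamma> \<noteq> w\<close> unfolding u_def by auto
    have "f u < f w" using f_translation[OF \<gamma>(1) u(1)] f_translation[OF \<gamma>] u(2) by simp
    moreover have "f u \<in> f ` {p \<gamma>..<q \<gamma>}" "f w \<in> f ` {p \<gamma>..<q \<gamma>}" using u \<gamma> by auto
    moreover have "f u \<in> {-1..<1}" using u(1) interval_subset[OF \<gamma>(1)] funpow_in[of u 1] by auto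
    ultimately show False using image_in_half[OF \<gamma>(1)] w(2) by auto
  qed
  then show ?thesis using \<gamma>(1) by blast
qed

end

locale keane_billiard_iet = billiard_iet +
  assumes keane: "modified_keane A p f"
begin

lemma keane_left_endpoints:
  "m \<ge> 1 \<Longrightarrow> \<alpha> \<in> A \<Longrightarrow> \<beta> \<in> A \<Longrightarrow> p \<beta> \<notin> {-1, 0} \<Longrightarrow> (f ^^ m) (p \<alpha>) \<noteq> p \<beta>"
  using keane unfolding modified_keane_def by blast

lemma periodic_left_endpoint_is_half_start:
  "\<alpha> \<in> A \<Longrightarrow> n \<ge> 1 \<Longrightarrow> (f ^^ n) (p \<alpha>) = p \<alpha> \<Longrightarrow> p \<alpha> \<in> {-1, 0}"
  using keane_left_endpoints by blast

lemma half_start_backward_on_periodic_orbit: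
  assumes y: "y \<in> {-1..<1}" and n: "n \<ge> 1" "(f ^^ n) y = y" and "(f ^^ j) y \<in> {-1, 0}"
  shows "y \<in> {-1, 0}"
  using y n \<open>(f ^^ j) y \<in> {-1, 0}\<close>
proof (induction j arbitrary: y)
  case (Suc j)
  have "(f ^^ n) (f y) = f y" using Suc.prems(3) by (metis funpow_swap1)
  moreover have "(f ^^ j) (f y) \<in> {-1, 0}" using Suc.prems(4) by (simp add: funpow_swap1)
  ultimately have "f y \<in> {-1, 0}"
    using Suc.IH[of "f y"] Suc.prems(1,2) funpow_in[of y 1] by simp
  then obtain \<gamma> where "\<gamma> \<in> A" "p \<gamma> = y"
    using preimage_of_half_start_is_left_endpoint Suc.prems(1) by blast
  then show ?case using periodic_left_endpoint_is_half_start Suc.prems by blast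
qed simp

lemma periodic_left_endpoint_image_half_start:
  assumes \<alpha>: "\<alpha> \<in> A" and n: "n \<ge> 1" "(f ^^ n) (p \<alpha>) = p \<alpha>"
  shows "f (p \<alpha>) \<in> {-1, 0}"
proof -
  have "f (p \<alpha>) \<in> {-1..<1}" using endpoints_bounds[OF \<alpha>] funpow_in[of "p \<alpha>" 1] by auto
  moreover have "(f ^^ n) (f (p \<alpha>)) = f (p \<alpha>)" using n(2) by (metis funpow_swap1)
  moreover have "(f ^^ (n - 1)) (f (p \<alpha>)) \<in> {-1, 0}"
  proof -
    have "(f ^^ (n - 1)) (f (p \<alpha>)) = (f ^^ Suc (n - 1)) (p \<alpha>)"
      by (simp only: funpow_Suc_right comp_apply)
    also have "\<dots> = p \<alpha>" using n by simp
    finally show ?thesis using periodic_left_endpoint_is_half_start[OF \<alpha> n] by simp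
  qed
  ultimately show ?thesis using half_start_backward_on_periodic_orbit n(1) by blast
qed

text \<open>The case \<open>\<alpha> = \<beta>\<close> excludes a fixed point at \<open>-1\<close> or \<open>0\<close>. The right endpoint \<open>q \<alpha>\<close> is a
  left endpoint other than \<open>-1\<close>, \<open>0\<close>, and it is reached from a left endpoint in one step
  (if the translate of \<open>I\<^sub>\<alpha>\<close> fills \<open>I\<^sub>\<beta>\<close>) or in two steps (through the point \<open>c\<close> of \<open>I\<^sub>\<beta>\<close>).\<close>

lemma no_exchange_of_half_starts:
  assumes \<alpha>: "\<alpha> \<in> A" "p \<alpha> \<in> {-1, 0}" and \<beta>: "\<beta> \<in> A"
    and f\<alpha>: "f (p \<alpha>) = p \<beta>" and f\<beta>: "f (p \<beta>) = p \<alpha>"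
    and shorter: "q \<alpha> - p \<alpha> \<le> q \<beta> - p \<beta>"
  shows False
proof -
  obtain \<gamma> where \<gamma>: "\<gamma> \<in> A" "p \<gamma> = q \<alpha>" "p \<gamma> \<notin> {-1, 0}"
    using interior_right_endpoint[OF \<alpha>] by blast
  have not_hit: "(f ^^ m) (p \<delta>) \<noteq> q \<alpha>" if "m \<ge> 1" "\<delta> \<in> A" for m \<delta>
    using keane_left_endpoints[OF that \<gamma>(1,3)] \<gamma>(2) by simp
  have q\<alpha>: "q \<alpha> \<in> {-1..<1}"
    using half_start_interval_short[OF \<alpha>] interval_nonempty[OF \<alpha>(1)] \<alpha>(2) by auto
  define c where "c = q \<alpha> + translation \<alpha>"
  have c: "c = q \<alpha> - p \<alpha> + p \<beta>" unfolding c_def translation_def using f\<alpha> by simp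
  have "p \<beta> < c" using c interval_nonempty[OF \<alpha>(1)] by simp
  show False
  proof (cases "c < q \<beta>")
    case True
    then have c\<beta>: "c \<in> {p \<beta>..<q \<beta>}" using \<open>p \<beta> < c\<close> by simp
    obtain \<delta> where \<delta>: "\<delta> \<in> A" "f (p \<delta>) = c"
      using translated_right_endpoint_image_of_left_endpoint[OF \<alpha>(1) c_def] c\<beta>
        interval_subset[OF \<beta>] by blast
    have "f c = q \<alpha>" using f_translation[OF \<beta> c\<beta>] c f\<beta> unfolding translation_def by simp
    then have "(f ^^ 2) (p \<delta>) = q \<alpha>" using \<delta> by (simp add: numeral_2_eq_2)
    then show False using not_hit[OF _ \<delta>(1), of 2] by simp
  next
    case False
    then have "q \<alpha> = q \<beta> + translation \<beta>"
      using c shorter f\<beta> unfolding translation_def by simp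
    then obtain \<delta> where \<delta>: "\<delta> \<in> A" "f (p \<delta>) = q \<alpha>"
      using translated_right_endpoint_image_of_left_endpoint[OF \<beta>] q\<alpha> by blast
    then show False using not_hit[OF _ \<delta>(1), of 1] by simp
  qed
qed

lemma no_periodic_point: "\<not> (\<exists>x. periodic_point f x)"
proof
  assume "\<exists>x. periodic_point f x"
  then obtain x n where n: "n \<ge> 1" and "x \<in> {-1..<1}" "(f ^^ n) x = x"
    unfolding periodic_point_def by blast
  then obtain \<alpha> where \<alpha>: "\<alpha> \<in> A" "(f ^^ n) (p \<alpha>) = p \<alpha>"
    using periodic_point_imp_periodic_left_endpoint by blast
  have a: "p \<alpha> \<in> {-1, 0}" using periodic_left_endpoint_is_half_start[OF \<alpha>(1) n \<alpha>(2)] .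
  obtain \<beta> where \<beta>: "\<beta> \<in> A" "p \<beta> = f (p \<alpha>)"
    using half_start_is_left_endpoint periodic_left_endpoint_image_half_start[OF \<alpha>(1) n \<alpha>(2)] by metis
  have per_\<beta>: "(f ^^ n) (p \<beta>) = p \<beta>" using \<alpha>(2) \<beta>(2) by (metis funpow_swap1)
  have b: "p \<beta> \<in> {-1, 0}" using periodic_left_endpoint_is_half_start[OF \<beta>(1) n per_\<beta>] .
  have fb: "f (p \<beta>) \<in> {-1, 0}" using periodic_left_endpoint_image_half_start[OF \<beta>(1) n per_\<beta>] .
  show False
  proof (cases "f (p \<beta>) = p \<beta>")
    case True
    then show False using no_exchange_of_half_starts[OF \<beta>(1) b \<beta>(1)] by simp
  next
    case False
    then have "p \<alpha> \<noteq> p \<beta>" using \<beta>(2) by metis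
    then have f\<beta>: "f (p \<beta>) = p \<alpha>" using False a b fb by auto
    show False
    proof (cases "q \<alpha> - p \<alpha> \<le> q \<beta> - p \<beta>")
      case True
      then show False using no_exchange_of_half_starts[OF \<alpha>(1) a \<beta>(1) \<beta>(2)[symmetric] f\<beta>] by blast
    next
      case False
      then show False using no_exchange_of_half_starts[OF \<beta>(1) b \<alpha>(1) f\<beta> \<beta>(2)[symmetric]] by linarith
    qed
  qed
qed

end

theorem lemma8p3:
  fixes A :: "'a set" and p q :: "'a \<Rightarrow> real" and f :: "real \<Rightarrow> real"
  assumes "billiard_like A p q f"
    and "modified_keane A p f"
  shows "\<not> (\<exists>x. periodic_point f x)"
proof -
  interpret keane_billiard_iet A p q f
    using assms by unfold_locales (simp_all add: billiard_like_def)
  show ?thesis by (rule no_periodic_point)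
qed

end
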